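(* There is an absolute constant $c>0$ such that the following holds. Let $n\ge 1$, $x\in\mathbb{R}^n$, let $R\ge 1$ and $k\ge 2$ be integers, and let $\widehat{x}$ be the Count-Sketch estimate of $x$ using $R$ rows and $k$ columns with fully random hash functions. Then for every real $t\le R$ and every index $i\in[n]$, \[ \Pr\left[(\widehat{x}_i - x_i)^2 > \frac{t}{R}\cdot \frac{\|x_{\overline{[k]}}\|_2^2}{k}\right] < 2e^{-ct}. \]
   Context: Count-Sketch with $R$ rows and $C$ columns: for each row $u\in[R]$ choose hash functions $h_u:[n]\to[C]$ and $s_u:[n]\to\{\pm1\}$; "fully random" means all values $h_u(i)$ (uniform on $[C]$) and $s_u(i)$ (uniform on $\{\pm1\}$), over all $u$ and $i$, are mutually independent. The sketch is $y_{u,v}=\sum_{i:h_u(i)=v}s_u(i)x_i$ for $u\in[R]$, $v\in[C]$, and the estimate is $\widehat{x}_i=\operatorname{median}_{u\in[R]} s_u(i)\,y_{u,h_u(i)}$ (for even $R$ the median is the average of the two middle values). For $x\in\mathbb{R}^n$, $x_{\overline{[k]}}$ denotes the vector obtained from $x$ by replacing its $k$ largest-magnitude coordinates with $0$. *)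

theory Defs
  imports "HOL-Probability.Probability"
begin

definition median_list :: "real list \<Rightarrow> real" where
  "median_list xs = (let ys = sort xs; m = length xs in
     if odd m then ys ! (m div 2) else (ys ! (m div 2 - 1) + ys ! (m div 2)) / 2)"

text \<open>Vectors in R^n are functions nat => real, only indices < n matter.
  Squared l2-norm of x with its k largest-magnitude coordinates set to 0.\<close>
definition tail_sq :: "nat \<Rightarrow> (nat \<Rightarrow> real) \<Rightarrow> nat \<Rightarrow> real" where
  "tail_sq n x k = sum_list (drop k (rev (sort (map (\<lambda>i. (x i)\<^sup>2) [0..<n]))))"

definition cs_sketch :: "nat \<Rightarrow> (nat \<times> nat \<Rightarrow> nat) \<Rightarrow> (nat \<times> nat \<Rightarrow> real) \<Rightarrow> (nat \<Rightarrow> real)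
    \<Rightarrow> nat \<Rightarrow> nat \<Rightarrow> real" where
  "cs_sketch n h s x u v = (\<Sum>j\<in>{j. j < n \<and> h (u, j) = v}. s (u, j) * x j)"

definition cs_est :: "nat \<Rightarrow> nat \<Rightarrow> (nat \<times> nat \<Rightarrow> nat) \<Rightarrow> (nat \<times> nat \<Rightarrow> real) \<Rightarrow> (nat \<Rightarrow> real)
    \<Rightarrow> nat \<Rightarrow> real" where
  "cs_est n R h s x i = median_list (map (\<lambda>u. s (u, i) * cs_sketch n h s x u (h (u, i))) [0..<R])"

definition cs_hashes :: "nat \<Rightarrow> nat \<Rightarrow> nat \<Rightarrow> ((nat \<times> nat \<Rightarrow> nat) \<times> (nat \<times> nat \<Rightarrow> real)) pmf" where
  "cs_hashes n R C = pmf_of_set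
     ((({0..<R} \<times> {0..<n}) \<rightarrow>\<^sub>E {0..<C}) \<times> (({0..<R} \<times> {0..<n}) \<rightarrow>\<^sub>E {-1, 1}))"

end

theory Submission
  imports Defs
begin

text \<open>
  In each row the signed bucket value is x_i + Z with noise Z = \<Sum>_{j \<noteq> i} x_j \<xi>_j, where the
  \<xi>_j = s(i) s(j) [h(j) = h(i)] are independent and take the values +1 and -1 with
  probability 1/(2k) each, and 0 otherwise. Such a \<xi>_j is the difference of two
  independent coins of bias p with p (1 - p) = 1/(2k), so Z is distributed as U f - U g
  for two independent families of coins and U f = \<Sum>_j x_j [f j]. Hence Z is symmetric,
  and P(Z > a) = (1 - P(|U f - U g| \<le> a)) / 2. The small-ball probability is at least
  a constant times a / \<sigma> with \<sigma>^2 = tail_sq / k: with probability at least 1/9 none of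
  the k heaviest coordinates is hit, Chebyshev keeps the remaining part within 3\<sigma> of its
  mean, and two independent samples then share a strip of width a with probability at
  least the square of that probability over the number of strips. Choosing
  a^2 = \<tau> \<sigma>^2 gives P(Z > a) \<le> 1/2 - c \<surd>\<tau> in every row, and the median errs by more
  than a only if half of the R independent rows do, which Hoeffding's inequality for
  the binomial distribution bounds by exp (-2 c^2 R \<tau>).
\<close>

lemma sorted_length_filter_greater:
  fixes ys :: "'a::linorder list"
  assumes "sorted ys" "m < length ys" "b < ys ! m"
  shows "length ys - m \<le> length (filter (\<lambda>v. b < v) ys)"
proof -
  have "{m..<length ys} \<subseteq> {j. j < length ys \<and> b < ys ! j}"
  proof
    fix j assume "j \<in> {m..<length ys}"
    then have "ys ! m \<le> ys ! j" using assms(1) by (auto intro: sorted_nth_mono)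
    then show "j \<in> {j. j < length ys \<and> b < ys ! j}" using \<open>j \<in> _\<close> assms(3) by auto
  qed
  then have "card {m..<length ys} \<le> card {j. j < length ys \<and> b < ys ! j}"
    by (intro card_mono) auto
  then show ?thesis by (simp add: length_filter_conv_card)
qed

lemma median_list_uminus:
  assumes "xs \<noteq> []"
  shows "median_list (map uminus xs) = - median_list xs"
proof -
  define ys where "ys = sort xs"
  define m where "m = length xs"
  have m: "m > 0" "length ys = m" using assms unfolding m_def ys_def by auto
  have rev: "rev (map uminus ys) ! j = - ys ! (m - Suc j)" if "j < m" for j
    using that m by (simp add: rev_nth)
  have "sort (map uminus xs) = rev (map uminus ys)"
    unfolding ys_def by (intro properties_for_sort) (auto simp: sorted_wrt_rev sorted_wrt_map)
  moreover have "rev (map uminus ys) ! (m div 2) = - ys ! (m div 2)" if "odd m"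
  proof -
    have "m - Suc (m div 2) = m div 2" using that by presburger
    then show ?thesis using rev[of "m div 2"] m by simp
  qed
  moreover have "rev (map uminus ys) ! (m div 2 - 1) = - ys ! (m div 2)"
    and "rev (map uminus ys) ! (m div 2) = - ys ! (m div 2 - 1)" if "even m"
  proof -
    have "m - Suc (m div 2 - 1) = m div 2" "m - Suc (m div 2) = m div 2 - 1"
      using that m by presburger+
    then show "rev (map uminus ys) ! (m div 2 - 1) = - ys ! (m div 2)"
      and "rev (map uminus ys) ! (m div 2) = - ys ! (m div 2 - 1)"
      using rev[of "m div 2 - 1"] rev[of "m div 2"] m by (simp_all add: less_imp_diff_less)
  qed
  ultimately show ?thesis
    using m unfolding median_list_def Let_def ys_def[symmetric] m_def[symmetric] length_map
    by (cases "odd m") (simp_all add: field_simps)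
qed

lemma length_filter_greater_if_median_list_greater:
  assumes "b < median_list xs"
  shows "length xs \<le> 2 * length (filter (\<lambda>v. b < v) xs)"
proof (cases "xs = []")
  case False
  define ys where "ys = sort xs"
  define m where "m = length xs"
  have ys: "sorted ys" "length ys = m" "m > 0" using False unfolding ys_def m_def by auto
  have mid: "b < ys ! (m div 2)"
  proof (cases "odd m")
    case True
    then show ?thesis using assms unfolding median_list_def ys_def m_def Let_def by simp
  next
    case False
    have "ys ! (m div 2 - 1) \<le> ys ! (m div 2)"
      using ys by (intro sorted_nth_mono) auto
    moreover have "b < (ys ! (m div 2 - 1) + ys ! (m div 2)) / 2"
      using assms False unfolding median_list_def ys_def m_def Let_def by simp
    ultimately show ?thesis by simp
  qed
  have "m - m div 2 \<le> length (filter (\<lambda>v. b < v) ys)"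
    using sorted_length_filter_greater[OF ys(1) _ mid] ys by simp
  also have "\<dots> = length (filter (\<lambda>v. b < v) xs)"
    unfolding ys_def by (metis filter_sort length_sort)
  finally show ?thesis unfolding m_def by linarith
qed simp

lemma length_filter_less_if_median_list_less:
  assumes "median_list xs < b"
  shows "length xs \<le> 2 * length (filter (\<lambda>v. v < b) xs)"
proof (cases "xs = []")
  case False
  then have "- b < median_list (map uminus xs)"
    using assms by (simp add: median_list_uminus)
  from length_filter_greater_if_median_list_greater[OF this] show ?thesis
    by (simp add: comp_def)
qed simp

lemma map_pmf_mem_eq_bernoulli_pmf:
  "map_pmf (\<lambda>r. r \<in> B) M = bernoulli_pmf (measure_pmf.prob M B)"
proof (rule pmf_eqI)
  fix b :: bool
  show "pmf (map_pmf (\<lambda>r. r \<in> B) M) b = pmf (bernoulli_pmf (measure_pmf.prob M B)) b"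
  proof (cases b)
    case True
    have "(\<lambda>r. r \<in> B) -` {True} = B" by auto
    then show ?thesis using True by (simp add: pmf_map)
  next
    case False
    have "(\<lambda>r. r \<in> B) -` {False} = UNIV - B" by auto
    then show ?thesis using False measure_pmf.prob_compl[of B M] by (simp add: pmf_map)
  qed
qed

lemma prob_Pi_pmf_majority_le:
  assumes "R \<ge> 1" "\<epsilon> \<ge> 0" "measure_pmf.prob M B \<le> 1/2 - \<epsilon>"
  shows "measure_pmf.prob (Pi_pmf {0..<R} d (\<lambda>_. M))
           {\<omega>. real R \<le> 2 * real (card {u\<in>{0..<R}. \<omega> u \<in> B})} \<le> exp (- 2 * real R * \<epsilon>\<^sup>2)"
proof -
  define q where "q = measure_pmf.prob M B"
  have q: "q \<in> {0..1}" unfolding q_def by auto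
  have "map_pmf (\<lambda>\<omega>. card {u\<in>{0..<R}. \<omega> u \<in> B}) (Pi_pmf {0..<R} d (\<lambda>_. M))
      = map_pmf (\<lambda>g. card {u\<in>{0..<R}. g u}) (map_pmf (\<lambda>\<omega> u. \<omega> u \<in> B) (Pi_pmf {0..<R} d (\<lambda>_. M)))"
    by (simp add: pmf.map_comp o_def)
  also have "map_pmf (\<lambda>\<omega> u. \<omega> u \<in> B) (Pi_pmf {0..<R} d (\<lambda>_. M))
      = Pi_pmf {0..<R} (d \<in> B) (\<lambda>_. map_pmf (\<lambda>r. r \<in> B) M)"
    using Pi_pmf_map[of "{0..<R}" "\<lambda>r. r \<in> B" d "d \<in> B" "\<lambda>_. M"] by (simp add: o_def)
  also have "map_pmf (\<lambda>r. r \<in> B) M = bernoulli_pmf q"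
    unfolding q_def by (rule map_pmf_mem_eq_bernoulli_pmf)
  also have "map_pmf (\<lambda>g. card {u\<in>{0..<R}. g u}) (Pi_pmf {0..<R} (d \<in> B) (\<lambda>_. bernoulli_pmf q))
      = binomial_pmf R q"
    by (rule binomial_pmf_altdef'[symmetric]) (use q in auto)
  finally have law: "map_pmf (\<lambda>\<omega>. card {u\<in>{0..<R}. \<omega> u \<in> B}) (Pi_pmf {0..<R} d (\<lambda>_. M))
      = binomial_pmf R q" .
  have "measure_pmf.prob (Pi_pmf {0..<R} d (\<lambda>_. M))
      {\<omega>. real R \<le> 2 * real (card {u\<in>{0..<R}. \<omega> u \<in> B})}
      = measure_pmf.prob (map_pmf (\<lambda>\<omega>. card {u\<in>{0..<R}. \<omega> u \<in> B}) (Pi_pmf {0..<R} d (\<lambda>_. M)))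
          {c. real R \<le> 2 * real c}"
    by simp
  also have "\<dots> = measure_pmf.prob (binomial_pmf R q) {c. real R \<le> 2 * real c}"
    by (simp only: law)
  also have "\<dots> \<le> measure_pmf.prob (binomial_pmf R q) {c. real c / real R \<ge> q + \<epsilon>}"
  proof (intro measure_pmf.finite_measure_mono subsetI)
    fix c assume "c \<in> {c. real R \<le> 2 * real c}"
    then have "1/2 \<le> real c / real R" using assms(1) by (simp add: field_simps)
    then show "c \<in> {c. real c / real R \<ge> q + \<epsilon>}" using assms(3) unfolding q_def mem_Collect_eq by linarith
  qed simp
  also have "\<dots> \<le> exp (- 2 * real R * \<epsilon>\<^sup>2)"
  proof -
    interpret binomial_distribution R q using q by unfold_locales
    show ?thesis using prob_ge'[OF _ assms(2)] assms(1) by simp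
  qed
  finally show ?thesis .
qed

definition hash_sign_pmf :: "nat \<Rightarrow> (nat \<times> real) pmf" where
  "hash_sign_pmf k = pmf_of_set ({0..<k} \<times> {-1, 1})"

definition row_pmf :: "nat \<Rightarrow> nat \<Rightarrow> (nat \<Rightarrow> nat \<times> real) pmf" where
  "row_pmf n k = Pi_pmf {0..<n} (0, 0) (\<lambda>_. hash_sign_pmf k)"

definition rows_pmf :: "nat \<Rightarrow> nat \<Rightarrow> nat \<Rightarrow> (nat \<Rightarrow> nat \<Rightarrow> nat \<times> real) pmf" where
  "rows_pmf n R k = Pi_pmf {0..<R} (\<lambda>_. (0, 0)) (\<lambda>_. row_pmf n k)"

text \<open>Outside the index range the tables are \<open>undefined\<close>, as are the extensional functions
  drawn by \<open>cs_hashes\<close>.\<close>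
definition tables_of_rows :: "nat \<Rightarrow> nat \<Rightarrow> (nat \<Rightarrow> nat \<Rightarrow> nat \<times> real)
    \<Rightarrow> (nat \<times> nat \<Rightarrow> nat) \<times> (nat \<times> nat \<Rightarrow> real)" where
  "tables_of_rows n R \<omega> =
     ((\<lambda>(u, j). if u < R \<and> j < n then fst (\<omega> u j) else undefined),
      (\<lambda>(u, j). if u < R \<and> j < n then snd (\<omega> u j) else undefined))"

lemma rows_pmf_eq_pmf_of_set:
  assumes "k \<ge> 1"
  shows "rows_pmf n R k = pmf_of_set (PiE_dflt {0..<R} (\<lambda>_. (0, 0))
           (\<lambda>_. PiE_dflt {0..<n} (0, 0) (\<lambda>_. {0..<k} \<times> {-1::real, 1})))"
proof -
  have ne: "{0..<k} \<times> {-1::real, 1} \<noteq> {}" using assms by auto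
  have "row_pmf n k = pmf_of_set (PiE_dflt {0..<n} (0, 0) (\<lambda>_. {0..<k} \<times> {-1::real, 1}))"
    unfolding row_pmf_def hash_sign_pmf_def using ne by (intro Pi_pmf_of_set) auto
  then show ?thesis unfolding rows_pmf_def using ne
    by (simp only:) (intro Pi_pmf_of_set, auto)
qed

lemma cs_hashes_eq_map_rows_pmf:
  assumes "k \<ge> 1"
  shows "cs_hashes n R k = map_pmf (tables_of_rows n R) (rows_pmf n R k)"
proof -
  define \<Omega> where "\<Omega> = PiE_dflt {0..<R} (\<lambda>_. (0, 0))
    (\<lambda>_. PiE_dflt {0..<n} (0, 0) (\<lambda>_. {0..<k} \<times> {-1::real, 1}))"
  define T where "T = ((({0..<R} \<times> {0..<n}) \<rightarrow>\<^sub>E {0..<k}) \<times>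
                       (({0..<R} \<times> {0..<n}) \<rightarrow>\<^sub>E {-1::real, 1}))"
  have "finite \<Omega>" "\<Omega> \<noteq> {}" unfolding \<Omega>_def using assms by (auto intro!: finite_PiE_dflt)
  moreover have "bij_betw (tables_of_rows n R) \<Omega> T"
  proof (rule bij_betwI)
    define rows :: "(nat \<times> nat \<Rightarrow> nat) \<times> (nat \<times> nat \<Rightarrow> real) \<Rightarrow> nat \<Rightarrow> nat \<Rightarrow> nat \<times> real"
      where "rows = (\<lambda>(h, s) u j. if u < R \<and> j < n then (h (u, j), s (u, j)) else (0, 0))"
    show "tables_of_rows n R \<in> \<Omega> \<rightarrow> T"
      unfolding \<Omega>_def T_def tables_of_rows_def PiE_dflt_def
      by (auto simp: PiE_def extensional_def mem_Times_iff) (metis fst_conv snd_conv)+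
    show "rows \<in> T \<rightarrow> \<Omega>"
      unfolding \<Omega>_def T_def PiE_dflt_def rows_def by (auto simp: PiE_def Pi_def)
    show "rows (tables_of_rows n R \<omega>) = \<omega>" if "\<omega> \<in> \<Omega>" for \<omega>
    proof (intro ext)
      fix u j
      show "rows (tables_of_rows n R \<omega>) u j = \<omega> u j"
        using that unfolding \<Omega>_def PiE_dflt_def rows_def tables_of_rows_def
        by (cases "u < R"; cases "j < n") auto
    qed
    show "tables_of_rows n R (rows hs) = hs" if "hs \<in> T" for hs
      using that unfolding T_def tables_of_rows_def rows_def
      by (cases hs) (auto simp: fun_eq_iff PiE_def extensional_def)
  qed
  ultimately have "map_pmf (tables_of_rows n R) (pmf_of_set \<Omega>) = pmf_of_set T"
    by (simp add: map_pmf_of_set_bij_betw)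
  then show ?thesis
    unfolding cs_hashes_def T_def \<Omega>_def rows_pmf_eq_pmf_of_set[OF assms] by simp
qed

definition collision_sign :: "nat \<times> real \<Rightarrow> nat \<times> real \<Rightarrow> real" where
  "collision_sign y z = (if fst z = fst y then snd y * snd z else 0)"

definition row_noise :: "nat \<Rightarrow> (nat \<Rightarrow> real) \<Rightarrow> nat \<Rightarrow> (nat \<Rightarrow> nat \<times> real) \<Rightarrow> real" where
  "row_noise n x i r = (\<Sum>j\<in>{0..<n}-{i}. x j * collision_sign (r i) (r j))"

lemma signed_bucket_sum_eq:
  assumes "i < n" "snd (r i) \<in> {-1, 1}"
  shows "snd (r i) * (\<Sum>j\<in>{j. j < n \<and> fst (r j) = fst (r i)}. snd (r j) * x j)
       = x i + row_noise n x i r"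
proof -
  have "{j. j < n \<and> fst (r j) = fst (r i)} = {j\<in>{0..<n}. fst (r j) = fst (r i)}" by auto
  then have "snd (r i) * (\<Sum>j\<in>{j. j < n \<and> fst (r j) = fst (r i)}. snd (r j) * x j)
      = (\<Sum>j\<in>{0..<n}. x j * collision_sign (r i) (r j))"
    by (simp only: sum.inter_filter[OF finite_atLeastLessThan] sum_distrib_left)
      (auto simp: collision_sign_def mult_ac intro: sum.cong)
  also have "\<dots> = x i * collision_sign (r i) (r i) + row_noise n x i r"
    unfolding row_noise_def using assms(1) by (subst sum.remove[of _ i]) auto
  also have "collision_sign (r i) (r i) = 1"
    using assms(2) unfolding collision_sign_def by auto
  finally show ?thesis by simp
qed

lemma cs_est_tables_of_rows:
  assumes "k \<ge> 1" "i < n" "\<omega> \<in> set_pmf (rows_pmf n R k)"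
  shows "cs_est n R (fst (tables_of_rows n R \<omega>)) (snd (tables_of_rows n R \<omega>)) x i
       = median_list (map (\<lambda>u. x i + row_noise n x i (\<omega> u)) [0..<R])"
  unfolding cs_est_def
proof (intro arg_cong[where f = median_list] map_cong refl)
  fix u assume "u \<in> set [0..<R]"
  then have u: "u < R" by simp
  have "\<omega> \<in> PiE_dflt {0..<R} (\<lambda>_. (0, 0)) (\<lambda>_. PiE_dflt {0..<n} (0, 0) (\<lambda>_. {0..<k} \<times> {-1::real, 1}))"
    using assms(1,3) unfolding rows_pmf_eq_pmf_of_set[OF assms(1)]
    by (subst (asm) set_pmf_of_set) (auto intro!: finite_PiE_dflt)
  then have "snd (\<omega> u i) \<in> {-1, 1}"
    using u assms(2) unfolding PiE_dflt_def by (auto simp: mem_Times_iff)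
  moreover have "cs_sketch n (fst (tables_of_rows n R \<omega>)) (snd (tables_of_rows n R \<omega>)) x u
        (fst (tables_of_rows n R \<omega>) (u, i))
      = (\<Sum>j\<in>{j. j < n \<and> fst (\<omega> u j) = fst (\<omega> u i)}. snd (\<omega> u j) * x j)"
    unfolding cs_sketch_def tables_of_rows_def using u assms(2) by (intro sum.cong) auto
  ultimately show "snd (tables_of_rows n R \<omega>) (u, i) * cs_sketch n (fst (tables_of_rows n R \<omega>))
        (snd (tables_of_rows n R \<omega>)) x u (fst (tables_of_rows n R \<omega>) (u, i))
      = x i + row_noise n x i (\<omega> u)"
    using signed_bucket_sum_eq[of i n "\<omega> u" x] u assms(2) by (simp add: tables_of_rows_def)
qed

text \<open>The bias \<open>p\<close> with \<open>p (1 - p) = 1/(2k)\<close>: the difference of two independent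
  \<open>p\<close>-coins then has the law of \<open>collision_sign\<close>.\<close>
definition coin_bias :: "nat \<Rightarrow> real" where
  "coin_bias k = (1 - sqrt (1 - 2 / real k)) / 2"

lemma coin_bias_bounds:
  assumes "k \<ge> 2"
  shows "0 \<le> coin_bias k" "coin_bias k \<le> 1/2"
    and coin_bias_variance: "coin_bias k * (1 - coin_bias k) = 1 / (2 * real k)"
    and "coin_bias k \<le> 1 / real k"
proof -
  have k: "real k \<ge> 2" using assms by simp
  have r: "0 \<le> 1 - 2 / real k" "1 - 2 / real k \<le> 1" using k by (auto simp: field_simps)
  then have s: "0 \<le> sqrt (1 - 2 / real k)" "sqrt (1 - 2 / real k) \<le> 1" by auto
  show nonneg: "0 \<le> coin_bias k" and half: "coin_bias k \<le> 1/2" unfolding coin_bias_def using s by auto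
  have "coin_bias k * (1 - coin_bias k) = (1 - (sqrt (1 - 2 / real k))\<^sup>2) / 4"
    unfolding coin_bias_def by (simp add: field_simps power2_eq_square)
  also have "(sqrt (1 - 2 / real k))\<^sup>2 = 1 - 2 / real k" using r by simp
  finally show var: "coin_bias k * (1 - coin_bias k) = 1 / (2 * real k)" using k by (simp add: field_simps)
  have "coin_bias k * (1/2) \<le> coin_bias k * (1 - coin_bias k)"
    using nonneg half by (intro mult_left_mono) auto
  then show "coin_bias k \<le> 1 / real k" using var k by (simp add: field_simps)
qed

lemma pmf_coin_difference:
  fixes v :: real
  assumes "0 \<le> p" "p \<le> 1"
  shows "pmf (map_pmf (\<lambda>(a, b). of_bool a - of_bool b) (pair_pmf (bernoulli_pmf p) (bernoulli_pmf p))) v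
       = (if v = 1 \<or> v = -1 then p * (1 - p) else if v = 0 then 1 - 2 * (p * (1 - p)) else 0)"
proof -
  define D where "D = (\<lambda>(a::bool, b::bool). of_bool a - (of_bool b :: real))"
  have "pmf (map_pmf D (pair_pmf (bernoulli_pmf p) (bernoulli_pmf p))) v
      = (\<Sum>z\<in>D -` {v}. pmf (pair_pmf (bernoulli_pmf p) (bernoulli_pmf p)) z)"
    unfolding pmf_map by (rule measure_measure_pmf_finite) simp
  also have "\<dots> = (\<Sum>z\<in>D -` {v}. pmf (bernoulli_pmf p) (fst z) * pmf (bernoulli_pmf p) (snd z))"
    by (intro sum.cong) (auto simp: pmf_pair)
  also have "D -` {v} = (if v = 1 then {(True, False)} else if v = -1 then {(False, True)}
             else if v = 0 then {(True, True), (False, False)} else {})"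
    unfolding D_def by (auto simp: of_bool_def split: if_splits)
  finally show ?thesis using assms unfolding D_def by (auto simp: algebra_simps)
qed

lemma pmf_collision_sign:
  assumes "k \<ge> 1" "y \<in> {0..<k} \<times> {-1, 1}"
  shows "pmf (map_pmf (collision_sign y) (hash_sign_pmf k)) v
       = (if v = 1 \<or> v = -1 then 1 / (2 * real k) else if v = 0 then 1 - 1 / real k else 0)"
proof -
  define S where "S = {0..<k} \<times> {-1::real, 1}"
  have y: "fst y < k" "snd y = 1 \<or> snd y = -1" using assms(2) by (auto simp: mem_Times_iff)
  have "pmf (map_pmf (collision_sign y) (hash_sign_pmf k)) v
      = real (card (S \<inter> collision_sign y -` {v})) / real (card S)"
    unfolding pmf_map hash_sign_pmf_def S_def using assms(1) by (subst measure_pmf_of_set) auto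
  also have "S \<inter> collision_sign y -` {v} = (if v = 1 then {(fst y, snd y)} else if v = -1 then {(fst y, - snd y)}
             else if v = 0 then ({0..<k} - {fst y}) \<times> {-1, 1} else {})"
    using y unfolding S_def collision_sign_def by (cases y) (auto split: if_splits)
  finally show ?thesis
    using assms(1) y unfolding S_def by (auto simp: card_cartesian_product field_simps)
qed

lemma collision_sign_eq_coin_difference:
  assumes "k \<ge> 2" "y \<in> {0..<k} \<times> {-1, 1}"
  shows "map_pmf (collision_sign y) (hash_sign_pmf k)
       = map_pmf (\<lambda>(a, b). of_bool a - of_bool b) (pair_pmf (bernoulli_pmf (coin_bias k)) (bernoulli_pmf (coin_bias k)))"
proof (rule pmf_eqI)
  fix v
  have "1 - 2 * (1 / (2 * real k)) = 1 - 1 / real k" using assms(1) by simp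
  then show "pmf (map_pmf (collision_sign y) (hash_sign_pmf k)) v = pmf (map_pmf (\<lambda>(a, b). of_bool a - of_bool b)
      (pair_pmf (bernoulli_pmf (coin_bias k)) (bernoulli_pmf (coin_bias k)))) v"
    using assms coin_bias_bounds[OF assms(1)]
    by (simp add: pmf_collision_sign pmf_coin_difference del: of_bool_eq)
qed

lemma Pi_pmf_pair_pmf_split:
  assumes "finite J"
  shows "map_pmf (\<lambda>h. (fst \<circ> h, snd \<circ> h)) (Pi_pmf J (d1, d2) (\<lambda>j. pair_pmf (A j) (B j)))
       = pair_pmf (Pi_pmf J d1 A) (Pi_pmf J d2 B)"
proof (rule pmf_eqI)
  fix z :: "('a \<Rightarrow> 'b) \<times> ('a \<Rightarrow> 'c)"
  obtain f1 f2 where z: "z = (f1, f2)" by (cases z)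
  have "(\<lambda>h. (fst \<circ> h, snd \<circ> h)) -` {z} = {\<lambda>j. (f1 j, f2 j)}"
    unfolding z by (auto simp: fun_eq_iff)
  then show "pmf (map_pmf (\<lambda>h. (fst \<circ> h, snd \<circ> h)) (Pi_pmf J (d1, d2) (\<lambda>j. pair_pmf (A j) (B j)))) z
       = pmf (pair_pmf (Pi_pmf J d1 A) (Pi_pmf J d2 B)) z"
    unfolding z using assms by (auto simp: pmf_map measure_pmf_single pmf_Pi pmf_pair prod.distrib)
qed

definition weighted_count :: "('a \<Rightarrow> real) \<Rightarrow> 'a set \<Rightarrow> ('a \<Rightarrow> bool) \<Rightarrow> real" where
  "weighted_count x J f = (\<Sum>j\<in>J. x j * of_bool (f j))"

definition coins_pmf :: "'a set \<Rightarrow> real \<Rightarrow> ('a \<Rightarrow> bool) pmf" where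
  "coins_pmf J p = Pi_pmf J False (\<lambda>_. bernoulli_pmf p)"

lemma map_pmf_sum_Pi_pmf_coin_difference:
  assumes "finite J"
  shows "map_pmf (\<lambda>h. \<Sum>j\<in>J. x j * h j) (Pi_pmf J 0 (\<lambda>_.
           map_pmf (\<lambda>(a, b). of_bool a - of_bool b) (pair_pmf (bernoulli_pmf p) (bernoulli_pmf p))))
       = map_pmf (\<lambda>(f, g). weighted_count x J f - weighted_count x J g) (pair_pmf (coins_pmf J p) (coins_pmf J p))"
proof -
  define dif where "dif = (\<lambda>(a::bool, b::bool). of_bool a - (of_bool b :: real))"
  have "Pi_pmf J 0 (\<lambda>_. map_pmf dif (pair_pmf (bernoulli_pmf p) (bernoulli_pmf p)))
      = map_pmf (\<lambda>h. dif \<circ> h) (Pi_pmf J (False, False) (\<lambda>_. pair_pmf (bernoulli_pmf p) (bernoulli_pmf p)))"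
    by (rule Pi_pmf_map) (auto simp: assms dif_def)
  then have "map_pmf (\<lambda>h. \<Sum>j\<in>J. x j * h j) (Pi_pmf J 0 (\<lambda>_. map_pmf dif (pair_pmf (bernoulli_pmf p) (bernoulli_pmf p))))
      = map_pmf (\<lambda>(f, g). weighted_count x J f - weighted_count x J g)
          (map_pmf (\<lambda>h. (fst \<circ> h, snd \<circ> h)) (Pi_pmf J (False, False) (\<lambda>_. pair_pmf (bernoulli_pmf p) (bernoulli_pmf p))))"
    by (simp add: pmf.map_comp o_def weighted_count_def dif_def case_prod_beta
        sum_subtractf[symmetric] algebra_simps)
  also have "\<dots> = map_pmf (\<lambda>(f, g). weighted_count x J f - weighted_count x J g)
      (pair_pmf (coins_pmf J p) (coins_pmf J p))"
    unfolding coins_pmf_def by (simp only: Pi_pmf_pair_pmf_split[OF assms])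
  finally show ?thesis unfolding dif_def .
qed

lemma row_noise_law:
  assumes "k \<ge> 2" "i < n"
  shows "map_pmf (row_noise n x i) (row_pmf n k) =
         map_pmf (\<lambda>(f, g). weighted_count x ({0..<n}-{i}) f - weighted_count x ({0..<n}-{i}) g)
           (pair_pmf (coins_pmf ({0..<n}-{i}) (coin_bias k)) (coins_pmf ({0..<n}-{i}) (coin_bias k)))"
proof -
  define J where "J = {0..<n} - {i}"
  define PiJ where "PiJ = Pi_pmf J (0, 0) (\<lambda>_. hash_sign_pmf k)"
  define W where "W = map_pmf (\<lambda>h. \<Sum>j\<in>J. x j * h j) (Pi_pmf J 0 (\<lambda>_.
    map_pmf (\<lambda>(a, b). of_bool a - of_bool b) (pair_pmf (bernoulli_pmf (coin_bias k)) (bernoulli_pmf (coin_bias k)))))"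
  have J: "finite J" "{0..<n} = insert i J" "i \<notin> J" unfolding J_def using assms(2) by auto
  have "row_pmf n k = map_pmf (\<lambda>(y, f). f(i := y)) (pair_pmf (hash_sign_pmf k) PiJ)"
    unfolding row_pmf_def PiJ_def J(2) using J(1,3) by (rule Pi_pmf_insert)
  then have "map_pmf (row_noise n x i) (row_pmf n k)
      = map_pmf (\<lambda>(y, f). \<Sum>j\<in>J. x j * collision_sign y (f j)) (pair_pmf (hash_sign_pmf k) PiJ)"
    by (simp add: pmf.map_comp o_def)
      (intro map_pmf_cong refl, auto simp: row_noise_def J_def collision_sign_def split: if_splits intro!: sum.cong)
  also have "\<dots> = bind_pmf (hash_sign_pmf k) (\<lambda>y. map_pmf (\<lambda>f. \<Sum>j\<in>J. x j * collision_sign y (f j)) PiJ)"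
    by (simp add: pair_pmf_def map_pmf_def bind_assoc_pmf bind_return_pmf)
  also have "\<dots> = bind_pmf (hash_sign_pmf k) (\<lambda>_. W)"
  proof (rule bind_pmf_cong[OF refl])
    fix y assume "y \<in> set_pmf (hash_sign_pmf k)"
    then have y: "y \<in> {0..<k} \<times> {-1, 1}"
      unfolding hash_sign_pmf_def using assms(1) by (subst (asm) set_pmf_of_set) auto
    have "map_pmf (\<lambda>f. \<Sum>j\<in>J. x j * collision_sign y (f j)) PiJ
        = map_pmf (\<lambda>h. \<Sum>j\<in>J. x j * h j) (map_pmf (\<lambda>f. collision_sign y \<circ> f) PiJ)"
      by (simp add: pmf.map_comp o_def)
    also have "map_pmf (\<lambda>f. collision_sign y \<circ> f) PiJ = Pi_pmf J 0 (\<lambda>_. map_pmf (collision_sign y) (hash_sign_pmf k))"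
      unfolding PiJ_def by (rule Pi_pmf_map[symmetric]) (auto simp: J collision_sign_def)
    finally show "map_pmf (\<lambda>f. \<Sum>j\<in>J. x j * collision_sign y (f j)) PiJ = W"
      unfolding W_def collision_sign_eq_coin_difference[OF assms(1) y, symmetric] .
  qed
  also have "\<dots> = W" by simp
  finally show ?thesis
    using map_pmf_sum_Pi_pmf_coin_difference[OF J(1), of x "coin_bias k"] unfolding W_def J_def by simp
qed

lemma finite_set_pmf_coins_pmf: "finite J \<Longrightarrow> finite (set_pmf (coins_pmf J p))"
  unfolding coins_pmf_def
  by (rule finite_subset[OF set_Pi_pmf_subset'[of J False]]) (auto intro!: finite_PiE_dflt)

lemma expectation_coins_pmf_prod:
  assumes "finite J" "S \<subseteq> J" "0 \<le> p" "p \<le> 1"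
  shows "measure_pmf.expectation (coins_pmf J p) (\<lambda>f. \<Prod>j\<in>S. of_bool (f j)) = p ^ card S"
proof -
  define F where "F = (\<lambda>j (v::bool). if j \<in> S then of_bool v else (1::real))"
  have S: "J \<inter> {j. j \<in> S} = S" "finite S" using assms(1,2) finite_subset by auto
  have "(\<lambda>f. \<Prod>j\<in>S. of_bool (f j) :: real) = (\<lambda>f. \<Prod>j\<in>J. F j (f j))"
    unfolding F_def prod.If_cases[OF assms(1)] S by simp
  then have "measure_pmf.expectation (coins_pmf J p) (\<lambda>f. \<Prod>j\<in>S. of_bool (f j))
      = (\<Prod>j\<in>J. measure_pmf.expectation (bernoulli_pmf p) (F j))"
    unfolding coins_pmf_def
    by (simp only:) (rule expectation_prod_Pi_pmf, auto simp: assms(1) F_def intro!: integrable_measure_pmf_finite)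
  also have "\<dots> = (\<Prod>j\<in>J. if j \<in> S then p else 1)"
    using assms by (intro prod.cong) (auto simp: F_def)
  also have "\<dots> = p ^ card S"
    unfolding prod.If_cases[OF assms(1)] S by simp
  finally show ?thesis .
qed

lemma variance_weighted_count_coins_pmf:
  assumes "finite J" "S \<subseteq> J" "0 \<le> p" "p \<le> 1"
  shows "measure_pmf.variance (coins_pmf J p) (weighted_count x S) = (\<Sum>j\<in>S. (x j)\<^sup>2) * (p * (1 - p))"
proof -
  define M where "M = coins_pmf J p"
  have int: "integrable M g" for g :: "_ \<Rightarrow> real"
    unfolding M_def by (rule integrable_measure_pmf_finite[OF finite_set_pmf_coins_pmf[OF assms(1)]])
  have finS: "finite S" using assms finite_subset by auto
  have E1: "measure_pmf.expectation M (\<lambda>f. of_bool (f j)) = p" if "j \<in> S" for j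
    using expectation_coins_pmf_prod[of J "{j}" p] assms that unfolding M_def by auto
  have E2: "measure_pmf.expectation M (\<lambda>f. of_bool (f j) * of_bool (f l)) = (if j = l then p else p * p)"
    if "j \<in> S" "l \<in> S" for j l
    using expectation_coins_pmf_prod[of J "{j, l}" p] assms that unfolding M_def
    by (cases "j = l") (auto simp: power2_eq_square of_bool_conj[symmetric])
  have EX: "measure_pmf.expectation M (weighted_count x S) = (\<Sum>j\<in>S. x j * p)"
    unfolding weighted_count_def by (subst Bochner_Integration.integral_sum) (auto simp: int E1)
  have "(\<lambda>f. (weighted_count x S f)\<^sup>2) = (\<lambda>f. \<Sum>j\<in>S. \<Sum>l\<in>S. x j * x l * (of_bool (f j) * of_bool (f l)))"
    unfolding weighted_count_def power2_eq_square sum_product by (simp add: algebra_simps)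
  then have EX2: "measure_pmf.expectation M (\<lambda>f. (weighted_count x S f)\<^sup>2)
      = (\<Sum>j\<in>S. \<Sum>l\<in>S. x j * x l * (if j = l then p else p * p))"
    by (simp add: Bochner_Integration.integral_sum int E2)
  have "(\<Sum>j\<in>S. x j * p)\<^sup>2 = (\<Sum>j\<in>S. \<Sum>l\<in>S. x j * x l * (p * p))"
    unfolding power2_eq_square sum_product by (simp add: algebra_simps)
  then have "measure_pmf.variance M (weighted_count x S)
      = (\<Sum>j\<in>S. \<Sum>l\<in>S. x j * x l * ((if j = l then p else p * p) - p * p))"
    by (subst measure_pmf.variance_eq) (auto simp: int EX EX2 sum_subtractf[symmetric] algebra_simps)
  also have "\<dots> = (\<Sum>j\<in>S. \<Sum>l\<in>S. if l = j then (x j)\<^sup>2 * (p * (1 - p)) else 0)"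
    by (intro sum.cong refl) (auto simp: power2_eq_square algebra_simps)
  also have "\<dots> = (\<Sum>j\<in>S. (x j)\<^sup>2 * (p * (1 - p)))"
    using finS by simp
  finally show ?thesis unfolding M_def by (simp add: sum_distrib_right)
qed

lemma prob_coins_pmf_all_false:
  assumes "finite J" "H \<subseteq> J" "0 \<le> p" "p \<le> 1"
  shows "measure_pmf.prob (coins_pmf J p) {f. \<forall>j\<in>H. \<not> f j} = (1 - p) ^ card H"
proof -
  have "{f. \<forall>j\<in>H. \<not> f j} = Pi J (\<lambda>j. if j \<in> H then {False} else UNIV)"
    using assms(2) by (auto simp: Pi_def)
  then have "measure_pmf.prob (coins_pmf J p) {f. \<forall>j\<in>H. \<not> f j}
      = (\<Prod>j\<in>J. measure_pmf.prob (bernoulli_pmf p) (if j \<in> H then {False} else UNIV))"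
    unfolding coins_pmf_def using assms(1) by (simp add: measure_Pi_pmf_Pi)
  also have "\<dots> = (\<Prod>j\<in>J. if j \<in> H then 1 - p else 1)"
    using assms(3,4) by (intro prod.cong) (auto simp: measure_pmf_single)
  also have "\<dots> = (1 - p) ^ card H"
    using assms(1,2) by (simp add: prod.If_cases Int_absorb1)
  finally show ?thesis .
qed

lemma exp_minus_two_le_one_minus:
  fixes p :: real
  assumes "0 \<le> p" "p \<le> 1/2"
  shows "exp (-2 * p) \<le> 1 - p"
proof -
  have "-2 * p \<le> - p - 2 * p\<^sup>2"
    using assms mult_left_mono[of p "1/2" p] by (simp add: power2_eq_square)
  also have "\<dots> \<le> ln (1 - p)" by (rule ln_one_minus_pos_lower_bound[OF assms])
  finally show ?thesis using assms by (simp add: ln_ge_iff)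
qed

lemma prob_coins_pmf_avoid:
  assumes "k \<ge> 2" "finite J" "H \<subseteq> J" "card H \<le> k"
  shows "measure_pmf.prob (coins_pmf J (coin_bias k)) {f. \<forall>j\<in>H. \<not> f j} \<ge> 1/9"
proof -
  define p where "p = coin_bias k"
  have p: "0 \<le> p" "p \<le> 1/2" "p * k \<le> 1"
    using coin_bias_bounds[OF assms(1)] assms(1) unfolding p_def by (auto simp: field_simps)
  have "exp (-2::real) \<ge> 1/9"
  proof -
    have "exp (2::real) = exp 1 * exp 1" by (simp flip: exp_add)
    also have "\<dots> \<le> 3 * 3" using exp_le by (intro mult_mono) auto
    finally show ?thesis by (simp add: exp_minus field_simps)
  qed
  also have "exp (-2) \<le> exp (-2 * p) ^ k"
    using p by (simp add: exp_of_nat_mult[symmetric] mult_ac)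
  also have "\<dots> \<le> (1 - p) ^ k"
    using p by (intro power_mono exp_minus_two_le_one_minus) auto
  also have "\<dots> \<le> (1 - p) ^ card H"
    using p assms(4) by (intro power_decreasing) auto
  also have "\<dots> = measure_pmf.prob (coins_pmf J p) {f. \<forall>j\<in>H. \<not> f j}"
    using p assms(2,3) by (simp add: prob_coins_pmf_all_false)
  finally show ?thesis unfolding p_def .
qed

lemma weighted_count_avoid:
  assumes "finite J" "H \<subseteq> J" "\<forall>j\<in>H. \<not> f j"
  shows "weighted_count x J f = weighted_count x (J - H) f"
  unfolding weighted_count_def using assms by (subst sum.subset_diff[of H J]) auto

text \<open>With probability at least 1/9 no coin on \<open>H\<close> shows heads, while by Chebyshev the
  count over \<open>J - H\<close> leaves \<open>[\<mu> - 3\<sigma>, \<mu> + 3\<sigma>)\<close> with probability at most 1/18.\<close>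
lemma prob_weighted_count_window:
  assumes "k \<ge> 2" "finite J" "H \<subseteq> J" "card H \<le> k"
    and tail: "(\<Sum>j\<in>J-H. (x j)\<^sup>2) \<le> real k * \<sigma>\<^sup>2" and "\<sigma> > 0"
  defines "\<mu> \<equiv> measure_pmf.expectation (coins_pmf J (coin_bias k)) (weighted_count x (J - H))"
  shows "measure_pmf.prob (coins_pmf J (coin_bias k))
           (weighted_count x J -` {\<mu> - 3 * \<sigma>..<\<mu> - 3 * \<sigma> + 6 * \<sigma>}) \<ge> 1/18"
proof -
  define M where "M = coins_pmf J (coin_bias k)"
  define A where "A = {f. \<forall>j\<in>H. \<not> f j}"
  define B where "B = {f. \<bar>weighted_count x (J - H) f - \<mu>\<bar> < 3 * \<sigma>}"
  have int: "integrable M g" for g :: "_ \<Rightarrow> real"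
    unfolding M_def by (rule integrable_measure_pmf_finite[OF finite_set_pmf_coins_pmf[OF assms(2)]])
  have "measure_pmf.variance M (weighted_count x (J - H))
      = (\<Sum>j\<in>J-H. (x j)\<^sup>2) * (coin_bias k * (1 - coin_bias k))"
    unfolding M_def using coin_bias_bounds[OF assms(1)] assms(2)
    by (intro variance_weighted_count_coins_pmf) auto
  also have "\<dots> \<le> real k * \<sigma>\<^sup>2 * (1 / (2 * real k))"
    unfolding coin_bias_variance[OF assms(1)] using tail by (intro mult_right_mono) auto
  finally have var: "measure_pmf.variance M (weighted_count x (J - H)) \<le> \<sigma>\<^sup>2 / 2"
    using assms(1) by simp
  have "measure_pmf.prob M {f \<in> space (measure_pmf M). \<bar>weighted_count x (J - H) f - \<mu>\<bar> \<ge> 3 * \<sigma>}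
      \<le> measure_pmf.variance M (weighted_count x (J - H)) / (3 * \<sigma>)\<^sup>2"
    unfolding \<mu>_def M_def[symmetric] using assms(6) by (intro measure_pmf.Chebyshev_inequality) (auto intro: int)
  also have "\<dots> \<le> 1/18"
    using var assms(6) by (simp add: field_simps power2_eq_square)
  finally have "measure_pmf.prob M (UNIV - B) \<le> 1/18"
    unfolding B_def by (simp add: not_less set_diff_eq)
  moreover have "measure_pmf.prob M A \<ge> 1/9"
    unfolding M_def A_def by (rule prob_coins_pmf_avoid[OF assms(1-4)])
  moreover have "measure_pmf.prob M A \<le> measure_pmf.prob M (A \<inter> B) + measure_pmf.prob M (UNIV - B)"
    by (rule order_trans[OF measure_pmf.finite_measure_mono measure_Un_le[of "A \<inter> B"]]) auto
  moreover have "A \<inter> B \<subseteq> weighted_count x J -` {\<mu> - 3 * \<sigma>..<\<mu> - 3 * \<sigma> + 6 * \<sigma>}"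
    using weighted_count_avoid[OF assms(2,3)] unfolding A_def B_def by fastforce
  then have "measure_pmf.prob M (A \<inter> B)
      \<le> measure_pmf.prob M (weighted_count x J -` {\<mu> - 3 * \<sigma>..<\<mu> - 3 * \<sigma> + 6 * \<sigma>})"
    by (rule measure_pmf.finite_measure_mono) simp
  ultimately show ?thesis unfolding M_def by linarith
qed

lemma atLeastLessThan_eq_UN_strips:
  fixes a L :: real
  assumes "a > 0"
  shows "{L..<L + real N * a} = (\<Union>m<N. {L + real m * a..<L + real (Suc m) * a})"
proof (intro equalityI subsetI)
  fix y assume y: "y \<in> {L..<L + real N * a}"
  define m where "m = nat \<lfloor>(y - L) / a\<rfloor>"
  have "0 \<le> (y - L) / a" "(y - L) / a < real N" using y assms by (auto simp: field_simps)
  then have "real m \<le> (y - L) / a" "(y - L) / a < real m + 1" "m < N"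
    unfolding m_def by (linarith, linarith, simp add: nat_less_iff floor_less_iff)
  then show "y \<in> (\<Union>m<N. {L + real m * a..<L + real (Suc m) * a})"
    using assms by (auto simp: field_simps intro!: bexI[of _ m])
next
  fix y assume "y \<in> (\<Union>m<N. {L + real m * a..<L + real (Suc m) * a})"
  then obtain m where m: "m < N" "y \<in> {L + real m * a..<L + real (Suc m) * a}" by auto
  have "real (Suc m) * a \<le> real N * a" "0 \<le> real m * a"
    using m(1) assms by (auto intro: mult_right_mono)
  then show "y \<in> {L..<L + real N * a}" using m(2) unfolding atLeastLessThan_iff by linarith
qed

lemma disjoint_family_strips:
  fixes a L :: real
  assumes "a > 0"
  shows "disjoint_family (\<lambda>m::nat. {L + real m * a..<L + real (Suc m) * a})"
proof (unfold disjoint_family_on_def, intro ballI impI)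
  fix m m' :: nat assume "m \<noteq> m'"
  then have "real (Suc m) \<le> real m' \<or> real (Suc m') \<le> real m" by linarith
  then have "L + real (Suc m) * a \<le> L + real m' * a \<or> L + real (Suc m') * a \<le> L + real m * a"
    using assms by (auto intro: mult_right_mono)
  then show "{L + real m * a..<L + real (Suc m) * a} \<inter> {L + real m' * a..<L + real (Suc m') * a} = {}"
    by auto
qed

lemma prob_pair_pmf_Times_self:
  "measure_pmf.prob (pair_pmf M M) (A \<times> A) = (measure_pmf.prob M A)\<^sup>2"
proof -
  have "measure_pmf.prob (pair_pmf M M) (A \<times> A) = measure_pmf.prob (pair_pmf M M) ((A \<times> A) \<inter> set_pmf (pair_pmf M M))"
    by (rule measure_Int_set_pmf[symmetric])
  also have "(A \<times> A) \<inter> set_pmf (pair_pmf M M) = (A \<inter> set_pmf M) \<times> (A \<inter> set_pmf M)" by auto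
  also have "measure_pmf.prob (pair_pmf M M) \<dots> = (measure_pmf.prob M (A \<inter> set_pmf M))\<^sup>2"
    unfolding power2_eq_square by (intro measure_pmf_prob_product) auto
  finally show ?thesis by (simp add: measure_Int_set_pmf)
qed

text \<open>Both samples fall into the same strip A_m with probability \<Sum>_m P(A_m)^2, which
  Cauchy-Schwarz bounds below by (\<Sum>_m P(A_m))^2 / N.\<close>
lemma prob_pair_pmf_close_ge:
  fixes U :: "'a \<Rightarrow> real"
  assumes "a > 0"
  shows "(measure_pmf.prob M (U -` {L..<L + real N * a}))\<^sup>2 / real N
       \<le> measure_pmf.prob (pair_pmf M M) {z. \<bar>U (fst z) - U (snd z)\<bar> \<le> a}"
proof -
  define A where "A = (\<lambda>m::nat. U -` {L + real m * a..<L + real (Suc m) * a})"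
  have disj: "disjoint_family A"
    using disjoint_family_strips[OF assms, of L] unfolding A_def disjoint_family_on_def by blast
  have "measure_pmf.prob M (U -` {L..<L + real N * a}) = (\<Sum>m<N. measure_pmf.prob M (A m))"
    unfolding atLeastLessThan_eq_UN_strips[OF assms] vimage_UN A_def
    by (rule measure_pmf.finite_measure_finite_Union) (use disj in \<open>auto simp: A_def disjoint_family_on_def\<close>)
  then have "(measure_pmf.prob M (U -` {L..<L + real N * a}))\<^sup>2 / real N
      \<le> (\<Sum>m<N. (measure_pmf.prob M (A m))\<^sup>2)"
    using sum_squared_le_sum_of_squares[of "\<lambda>m. measure_pmf.prob M (A m)" "{..<N}"]
    by (cases "N = 0") (auto simp: field_simps)
  also have "\<dots> = measure_pmf.prob (pair_pmf M M) (\<Union>m<N. A m \<times> A m)"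
    unfolding prob_pair_pmf_Times_self[symmetric] using disj
    by (intro measure_pmf.finite_measure_finite_Union[symmetric]) (auto simp: disjoint_family_on_def)
  also have "\<dots> \<le> measure_pmf.prob (pair_pmf M M) {z. \<bar>U (fst z) - U (snd z)\<bar> \<le> a}"
  proof (intro measure_pmf.finite_measure_mono subsetI)
    fix z assume "z \<in> (\<Union>m<N. A m \<times> A m)"
    then show "z \<in> {z. \<bar>U (fst z) - U (snd z)\<bar> \<le> a}" unfolding A_def by (auto simp: abs_le_iff distrib_right)
  qed simp
  finally show ?thesis .
qed

lemma prob_weighted_count_diff_le:
  assumes "k \<ge> 2" "finite J" "H \<subseteq> J" "card H \<le> k"
    and tail: "(\<Sum>j\<in>J-H. (x j)\<^sup>2) \<le> real k * \<sigma>\<^sup>2" and "0 < a" "a \<le> \<sigma>"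
  shows "measure_pmf.prob (pair_pmf (coins_pmf J (coin_bias k)) (coins_pmf J (coin_bias k)))
           {z. \<bar>weighted_count x J (fst z) - weighted_count x J (snd z)\<bar> \<le> a} \<ge> a / (2268 * \<sigma>)"
proof -
  define M where "M = coins_pmf J (coin_bias k)"
  define L where "L = measure_pmf.expectation M (weighted_count x (J - H)) - 3 * \<sigma>"
  define r where "r = \<sigma> / a"
  define N where "N = nat \<lceil>6 * r\<rceil>"
  have \<sigma>: "\<sigma> > 0" using assms(6,7) by simp
  have "1 \<le> r" using assms(6,7) unfolding r_def by simp
  then have N: "real N \<ge> 6 * r" "real N \<le> 7 * r" unfolding N_def by linarith+
  have "1/18 \<le> measure_pmf.prob M (weighted_count x J -` {L..<L + 6 * \<sigma>})"
    using prob_weighted_count_window[OF assms(1-4) tail \<sigma>] unfolding M_def L_def by simp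
  also have "\<dots> \<le> measure_pmf.prob M (weighted_count x J -` {L..<L + real N * a})"
    using N(1) assms(6) unfolding r_def by (intro measure_pmf.finite_measure_mono) (auto simp: field_simps)
  finally have window: "1/18 \<le> measure_pmf.prob M (weighted_count x J -` {L..<L + real N * a})" .
  have "a / (2268 * \<sigma>) = (1/18)\<^sup>2 / (7 * r)" using assms(6) \<sigma> unfolding r_def by (simp add: field_simps)
  also have "\<dots> \<le> (1/18)\<^sup>2 / real N"
    using N \<open>1 \<le> r\<close> by (intro divide_left_mono) auto
  also have "\<dots> \<le> (measure_pmf.prob M (weighted_count x J -` {L..<L + real N * a}))\<^sup>2 / real N"
    using window by (intro divide_right_mono power_mono) auto
  also have "\<dots> \<le> measure_pmf.prob (pair_pmf M M)
      {z. \<bar>weighted_count x J (fst z) - weighted_count x J (snd z)\<bar> \<le> a}"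
    by (rule prob_pair_pmf_close_ge[OF assms(6)])
  finally show ?thesis unfolding M_def .
qed

lemma prob_weighted_count_diff_le_null_tail:
  assumes "k \<ge> 2" "finite J" "H \<subseteq> J" "card H \<le> k"
    and "\<forall>j\<in>J-H. x j = 0" and "0 \<le> a"
  shows "measure_pmf.prob (pair_pmf (coins_pmf J (coin_bias k)) (coins_pmf J (coin_bias k)))
           {z. \<bar>weighted_count x J (fst z) - weighted_count x J (snd z)\<bar> \<le> a} \<ge> 1/81"
proof -
  define A where "A = {f. \<forall>j\<in>H. \<not> f j}"
  have "weighted_count x J f = 0" if "f \<in> A" for f
    using weighted_count_avoid[OF assms(2,3), of f x] that assms(5)
    unfolding A_def weighted_count_def by simp
  then have sub: "A \<times> A \<subseteq> {z. \<bar>weighted_count x J (fst z) - weighted_count x J (snd z)\<bar> \<le> a}"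
    using assms(6) by auto
  have "1/81 = (1/9::real)\<^sup>2" by (simp add: power2_eq_square)
  also have "\<dots> \<le> measure_pmf.prob (pair_pmf (coins_pmf J (coin_bias k)) (coins_pmf J (coin_bias k))) (A \<times> A)"
    unfolding prob_pair_pmf_Times_self A_def using prob_coins_pmf_avoid[OF assms(1-4)]
    by (intro power_mono) auto
  also have "\<dots> \<le> measure_pmf.prob (pair_pmf (coins_pmf J (coin_bias k)) (coins_pmf J (coin_bias k)))
      {z. \<bar>weighted_count x J (fst z) - weighted_count x J (snd z)\<bar> \<le> a}"
    using sub by (rule measure_pmf.finite_measure_mono) simp
  finally show ?thesis .
qed

lemma prob_pair_pmf_diff_greater:
  fixes U :: "'a \<Rightarrow> real" and M :: "'a pmf"
  assumes "a \<ge> 0"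
  defines "q \<equiv> measure_pmf.prob (pair_pmf M M) {z. \<bar>U (fst z) - U (snd z)\<bar> \<le> a}"
  shows "measure_pmf.prob (pair_pmf M M) {z. U (fst z) - U (snd z) > a} = (1 - q) / 2"
    and "measure_pmf.prob (pair_pmf M M) {z. U (fst z) - U (snd z) < -a} = (1 - q) / 2"
proof -
  define pp where "pp = measure_pmf.prob (pair_pmf M M) {z. U (fst z) - U (snd z) > a}"
  define pm where "pm = measure_pmf.prob (pair_pmf M M) {z. U (fst z) - U (snd z) < -a}"
  have "pp = measure_pmf.prob (map_pmf (\<lambda>(x, y). (y, x)) (pair_pmf M M)) {z. U (fst z) - U (snd z) > a}"
    unfolding pp_def by (subst pair_commute_pmf) (rule refl)
  also have "\<dots> = pm"
    unfolding pm_def by (simp add: case_prod_beta) (intro arg_cong[where f = "measure_pmf.prob _"], auto)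
  finally have sym: "pp = pm" .
  have "{z. U (fst z) - U (snd z) > a} \<union> {z. U (fst z) - U (snd z) < -a}
      = UNIV - {z. \<bar>U (fst z) - U (snd z)\<bar> \<le> a}" by auto
  then have "pp + pm = 1 - q"
    unfolding pp_def pm_def q_def using assms(1) measure_pmf.prob_compl[of _ "pair_pmf M M"]
    by (subst measure_pmf.finite_measure_Union[symmetric]) auto
  then show "pp = (1 - q) / 2" "pm = (1 - q) / 2" using sym by auto
qed

lemma tail_sq_eq_sum_compl:
  "\<exists>H. H \<subseteq> {0..<n} \<and> card H \<le> k \<and> tail_sq n x k = (\<Sum>j\<in>{0..<n}-H. (x j)\<^sup>2)"
proof -
  define f where "f = (\<lambda>j. (x j)\<^sup>2)"
  define idx where "idx = sort_key (\<lambda>j. - f j) [0..<n]"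
  have ms: "mset idx = mset [0..<n]" unfolding idx_def by simp
  have dist: "distinct idx" using ms by (metis distinct_upt mset_eq_imp_distinct_iff)
  have set_idx: "set idx = {0..<n}" using ms by (metis atLeastLessThan_upt mset_eq_setD)
  have "sorted (map (\<lambda>j. - f j) idx)" unfolding idx_def by (rule sorted_sort_key)
  then have "sorted (rev (map f idx))"
    by (simp add: sorted_map sorted_wrt_rev rev_map[symmetric] sorted_wrt_map)
  moreover have "mset (rev (map f idx)) = mset (map f [0..<n])" using ms by simp
  ultimately have "sort (map f [0..<n]) = rev (map f idx)" by (intro properties_for_sort) auto
  then have "tail_sq n x k = sum_list (map f (drop k idx))"
    unfolding tail_sq_def f_def[symmetric] by (simp add: drop_map)
  also have "\<dots> = (\<Sum>j\<in>set (drop k idx). f j)"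
    using dist by (simp add: sum_list_distinct_conv_sum_set)
  also have "set (drop k idx) = {0..<n} - set (take k idx)"
  proof -
    have "set idx = set (take k idx) \<union> set (drop k idx)" by (metis append_take_drop_id set_append)
    moreover have "set (take k idx) \<inter> set (drop k idx) = {}"
      using dist by (intro set_take_disj_set_drop_if_distinct) auto
    ultimately show ?thesis using set_idx by auto
  qed
  finally have "tail_sq n x k = (\<Sum>j\<in>{0..<n} - set (take k idx). (x j)\<^sup>2)" unfolding f_def .
  moreover have "card (set (take k idx)) \<le> k" by (metis card_length le_trans length_take min.cobounded2)
  moreover have "set (take k idx) \<subseteq> {0..<n}" using set_idx by (metis set_take_subset)
  ultimately show ?thesis by blast
qed

lemma tail_sq_nonneg: "tail_sq n x k \<ge> 0"
  using tail_sq_eq_sum_compl[of n k x] by (metis sum_nonneg zero_le_power2)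

lemma prob_row_noise_small_ge:
  fixes x :: "nat \<Rightarrow> real"
  assumes "k \<ge> 2" "i < n" "0 < \<tau>" "\<tau> \<le> 1"
  defines "J \<equiv> {0..<n} - {i}" and "a \<equiv> sqrt (\<tau> * (tail_sq n x k / real k))"
  shows "measure_pmf.prob (pair_pmf (coins_pmf J (coin_bias k)) (coins_pmf J (coin_bias k)))
           {z. \<bar>weighted_count x J (fst z) - weighted_count x J (snd z)\<bar> \<le> a} \<ge> sqrt \<tau> / 2268"
proof -
  obtain H where H: "H \<subseteq> {0..<n}" "card H \<le> k" "tail_sq n x k = (\<Sum>j\<in>{0..<n}-H. (x j)\<^sup>2)"
    using tail_sq_eq_sum_compl by blast
  define \<sigma> where "\<sigma> = sqrt (tail_sq n x k / real k)"
  have "card (H \<inter> J) \<le> card H"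
    using finite_subset[OF H(1)] by (intro card_mono) auto
  then have J: "finite J" "H \<inter> J \<subseteq> J" "card (H \<inter> J) \<le> k"
    unfolding J_def using H(2) by auto
  have "\<sigma> \<ge> 0" "real k * \<sigma>\<^sup>2 = tail_sq n x k" unfolding \<sigma>_def using assms(1) tail_sq_nonneg[of n x k] by auto
  have "(\<Sum>j\<in>J-(H \<inter> J). (x j)\<^sup>2) \<le> (\<Sum>j\<in>{0..<n}-H. (x j)\<^sup>2)"
    unfolding J_def by (intro sum_mono2) auto
  also have "\<dots> = real k * \<sigma>\<^sup>2" using H(3) \<open>real k * \<sigma>\<^sup>2 = tail_sq n x k\<close> by simp
  finally have tail: "(\<Sum>j\<in>J-(H \<inter> J). (x j)\<^sup>2) \<le> real k * \<sigma>\<^sup>2" .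
  have a: "a = sqrt \<tau> * \<sigma>" unfolding a_def \<sigma>_def by (rule real_sqrt_mult)
  show ?thesis
  proof (cases "\<sigma> = 0")
    case True
    then have "(\<Sum>j\<in>J-(H \<inter> J). (x j)\<^sup>2) = 0"
      using tail sum_nonneg[of "J-(H \<inter> J)" "\<lambda>j. (x j)\<^sup>2"] by auto
    then have "\<forall>j\<in>J-(H \<inter> J). x j = 0"
      using J(1) by (subst (asm) sum_nonneg_eq_0_iff) auto
    moreover have "0 \<le> a" unfolding a using True by simp
    ultimately have "1/81 \<le> measure_pmf.prob (pair_pmf (coins_pmf J (coin_bias k)) (coins_pmf J (coin_bias k)))
           {z. \<bar>weighted_count x J (fst z) - weighted_count x J (snd z)\<bar> \<le> a}"
      by (rule prob_weighted_count_diff_le_null_tail[OF assms(1) J])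
    moreover have "sqrt \<tau> \<le> 1" using assms(4) by simp
    ultimately show ?thesis by linarith
  next
    case False
    then have "0 < a" "a \<le> \<sigma>" "a / (2268 * \<sigma>) = sqrt \<tau> / 2268"
      using \<open>\<sigma> \<ge> 0\<close> assms(3,4) unfolding a by (auto intro: mult_left_le_one_le)
    then show ?thesis using prob_weighted_count_diff_le[OF assms(1) J tail, of a] by simp
  qed
qed

lemma prob_row_noise_greater_le:
  fixes x :: "nat \<Rightarrow> real"
  assumes "k \<ge> 2" "i < n" "0 < \<tau>" "\<tau> \<le> 1"
  defines "a \<equiv> sqrt (\<tau> * (tail_sq n x k / real k))"
  shows "measure_pmf.prob (row_pmf n k) {r. a < row_noise n x i r} \<le> 1/2 - sqrt \<tau> / 4536"
    and "measure_pmf.prob (row_pmf n k) {r. row_noise n x i r < -a} \<le> 1/2 - sqrt \<tau> / 4536"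
proof -
  define J where "J = {0..<n} - {i}"
  define P where "P = coins_pmf J (coin_bias k)"
  define U where "U = weighted_count x J"
  have law: "measure_pmf.prob (row_pmf n k) {r. Q (row_noise n x i r)}
      = measure_pmf.prob (pair_pmf P P) {z. Q (U (fst z) - U (snd z))}" for Q
  proof -
    have "measure_pmf.prob (row_pmf n k) {r. Q (row_noise n x i r)}
        = measure_pmf.prob (map_pmf (row_noise n x i) (row_pmf n k)) {v. Q v}"
      by simp
    also have "\<dots> = measure_pmf.prob (map_pmf (\<lambda>z. U (fst z) - U (snd z)) (pair_pmf P P)) {v. Q v}"
      unfolding row_noise_law[OF assms(1,2)] P_def U_def J_def by (simp add: case_prod_beta)
    finally show ?thesis by simp
  qed
  have "0 \<le> a" unfolding a_def using assms(3) tail_sq_nonneg[of n x k] by simp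
  have "sqrt \<tau> / 2268 \<le> measure_pmf.prob (pair_pmf P P) {z. \<bar>U (fst z) - U (snd z)\<bar> \<le> a}"
    unfolding P_def U_def J_def a_def by (rule prob_row_noise_small_ge[OF assms(1-4)])
  then show "measure_pmf.prob (row_pmf n k) {r. a < row_noise n x i r} \<le> 1/2 - sqrt \<tau> / 4536"
    and "measure_pmf.prob (row_pmf n k) {r. row_noise n x i r < -a} \<le> 1/2 - sqrt \<tau> / 4536"
    using law[of "\<lambda>v. a < v"] law[of "\<lambda>v. v < -a"] prob_pair_pmf_diff_greater[OF \<open>0 \<le> a\<close>, where U = U and M = P]
    by simp_all
qed

lemma cs_est_error_imp_majority:
  assumes "k \<ge> 1" "i < n" "\<omega> \<in> set_pmf (rows_pmf n R k)" "0 \<le> a"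
    and "a\<^sup>2 < (cs_est n R (fst (tables_of_rows n R \<omega>)) (snd (tables_of_rows n R \<omega>)) x i - x i)\<^sup>2"
  shows "real R \<le> 2 * real (card {u\<in>{0..<R}. \<omega> u \<in> {r. a < row_noise n x i r}})
       \<or> real R \<le> 2 * real (card {u\<in>{0..<R}. \<omega> u \<in> {r. row_noise n x i r < -a}})"
proof -
  define L where "L = map (\<lambda>u. x i + row_noise n x i (\<omega> u)) [0..<R]"
  have count: "length (filter P L) = card {u\<in>{0..<R}. P (x i + row_noise n x i (\<omega> u))}" for P
    unfolding L_def by (simp add: length_filter_conv_card) (intro arg_cong[where f = card], auto)
  have "a\<^sup>2 < (median_list L - x i)\<^sup>2"
    using assms(5) unfolding cs_est_tables_of_rows[OF assms(1-3)] L_def .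
  then have "a < \<bar>median_list L - x i\<bar>"
    using assms(4) by (metis abs_ge_zero power2_abs power_mono not_less)
  then have "x i + a < median_list L \<or> median_list L < x i - a" by linarith
  then show ?thesis
  proof
    assume "x i + a < median_list L"
    from length_filter_greater_if_median_list_greater[OF this]
    have "length L \<le> 2 * card {u\<in>{0..<R}. x i + a < x i + row_noise n x i (\<omega> u)}"
      by (simp only: count)
    then show ?thesis unfolding L_def by (simp flip: of_nat_mult)
  next
    assume "median_list L < x i - a"
    from length_filter_less_if_median_list_less[OF this]
    have "length L \<le> 2 * card {u\<in>{0..<R}. x i + row_noise n x i (\<omega> u) < x i - a}"
      by (simp only: count)
    then show ?thesis unfolding L_def by (simp flip: of_nat_mult)
  qed
qed

lemma prob_cs_est_error_le:
  assumes "k \<ge> 2" "i < n" "R \<ge> 1" "0 < \<tau>" "\<tau> \<le> 1"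
  shows "measure_pmf.prob (cs_hashes n R k)
           {(h, s). (cs_est n R h s x i - x i)\<^sup>2 > \<tau> * (tail_sq n x k / real k)}
         \<le> 2 * exp (- 2 * real R * \<tau> / 4536\<^sup>2)"
proof -
  define a where "a = sqrt (\<tau> * (tail_sq n x k / real k))"
  define \<epsilon> where "\<epsilon> = sqrt \<tau> / 4536"
  define E where "E = {(h, s). (cs_est n R h s x i - x i)\<^sup>2 > \<tau> * (tail_sq n x k / real k)}"
  define Bp where "Bp = {\<omega>. real R \<le> 2 * real (card {u\<in>{0..<R}. \<omega> u \<in> {r. a < row_noise n x i r}})}"
  define Bm where "Bm = {\<omega>. real R \<le> 2 * real (card {u\<in>{0..<R}. \<omega> u \<in> {r. row_noise n x i r < -a}})}"
  have a: "0 \<le> a" "a\<^sup>2 = \<tau> * (tail_sq n x k / real k)"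
    unfolding a_def using assms(4) tail_sq_nonneg[of n x k] by auto
  have "0 \<le> \<epsilon>" unfolding \<epsilon>_def using assms(4) by simp
  have "measure_pmf.prob (cs_hashes n R k) E = measure_pmf.prob (rows_pmf n R k) (tables_of_rows n R -` E)"
    using assms(1) by (simp add: cs_hashes_eq_map_rows_pmf)
  also have "\<dots> = measure_pmf.prob (rows_pmf n R k) (tables_of_rows n R -` E \<inter> set_pmf (rows_pmf n R k))"
    by (rule measure_Int_set_pmf[symmetric])
  also have "\<dots> \<le> measure_pmf.prob (rows_pmf n R k) (Bp \<union> Bm)"
    using cs_est_error_imp_majority[of k i n _ R a x] assms(1,2) a
    by (intro measure_pmf.finite_measure_mono) (auto simp: E_def Bp_def Bm_def case_prod_beta)
  also have "\<dots> \<le> measure_pmf.prob (rows_pmf n R k) Bp + measure_pmf.prob (rows_pmf n R k) Bm"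
    by (rule measure_Un_le) auto
  also have "\<dots> \<le> exp (- 2 * real R * \<epsilon>\<^sup>2) + exp (- 2 * real R * \<epsilon>\<^sup>2)"
    unfolding Bp_def Bm_def rows_pmf_def using prob_row_noise_greater_le[OF assms(1,2,4,5), of x]
    by (intro add_mono prob_Pi_pmf_majority_le[OF assms(3) \<open>0 \<le> \<epsilon>\<close>]) (simp_all add: a_def \<epsilon>_def)
  also have "\<epsilon>\<^sup>2 = \<tau> / 4536\<^sup>2" unfolding \<epsilon>_def using assms(4) by (simp add: power_divide)
  finally show ?thesis unfolding E_def by simp
qed

theorem theorem1p1:
  shows "\<exists>c::real > 0. \<forall>n::nat. \<forall>x::nat \<Rightarrow> real. \<forall>R::nat. \<forall>k::nat. \<forall>t::real. \<forall>i::nat.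
    n \<ge> 1 \<longrightarrow> R \<ge> 1 \<longrightarrow> k \<ge> 2 \<longrightarrow> t \<le> real R \<longrightarrow> i < n \<longrightarrow>
    measure_pmf.prob (cs_hashes n R k)
      {(h, s). (cs_est n R h s x i - x i)\<^sup>2 > t / real R * (tail_sq n x k / real k)}
    < 2 * exp (- c * t)"
proof (intro exI[of _ "1 / 4536\<^sup>2"] conjI allI impI)
  fix n :: nat and x :: "nat \<Rightarrow> real" and R k :: nat and t :: real and i :: nat
  assume "n \<ge> 1" "R \<ge> 1" "k \<ge> 2" "t \<le> real R" "i < n"
  show "measure_pmf.prob (cs_hashes n R k)
      {(h, s). (cs_est n R h s x i - x i)\<^sup>2 > t / real R * (tail_sq n x k / real k)}
    < 2 * exp (- (1 / 4536\<^sup>2) * t)"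
  proof (cases "t > 0")
    case True
    have "measure_pmf.prob (cs_hashes n R k)
        {(h, s). (cs_est n R h s x i - x i)\<^sup>2 > t / real R * (tail_sq n x k / real k)}
      \<le> 2 * exp (- 2 * real R * (t / real R) / 4536\<^sup>2)"
      using \<open>R \<ge> 1\<close> \<open>t \<le> real R\<close> True
      by (intro prob_cs_est_error_le[OF \<open>k \<ge> 2\<close> \<open>i < n\<close> \<open>R \<ge> 1\<close>]) auto
    also have "\<dots> < 2 * exp (- (1 / 4536\<^sup>2) * t)"
      using \<open>R \<ge> 1\<close> True by simp
    finally show ?thesis .
  next
    case False
    then have "1 \<le> exp (- (1 / 4536\<^sup>2) * t)" by simp
    then show ?thesis using measure_pmf.prob_le_1 by (smt (verit))
  qed
qed (simp)

end
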